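(* Let $\Gamma$ be a lattice satisfying the standing assumptions below, and let $\mathcal{F}=\{f\in C_2(\Gamma): |\iota(f)|=1\}$. Let $f,f'\in\mathcal{F}$ and let $\rho=(f_1=f,f_2,\dots,f_m=f')$ be a face path from $f$ to $f'$ with $m\ge 2$. Then the operator $W^Z_{f,f'}(\rho)=\prod_{i=1}^m Z_{f_i}$ commutes with every element of the stabilizer group of the 3D toric code on $\Gamma$, i.e. it is either a stabilizer or a logical operator.
   Context: $\Gamma$ is a finite, connected three-dimensional cell complex (lattice) with vertices $C_0(\Gamma)$, edges $C_1(\Gamma)$ (partial edges, incident on only one vertex, are allowed at the boundary), faces $C_2(\Gamma)$ and volumes $C_3(\Gamma)$. For a face $f$, $\partial(f)$ is its set of boundary edges; for a volume $\nu$, $\partial(\nu)$ is its set of boundary faces; for an edge $e$, $\iota(e)$ is the set of faces $f$ with $e\in\partial(f)$; for a face $f$, $\iota(f)$ is the set of volumes $\nu$ with $f\in\partial(\nu)$. Every face lies in the boundary of at most two volumes. Standing assumptions: (L1) $\Gamma$ has no boundaries in its interior; (L2) the boundary of every face of $\Gamma$ and of every face of the dual complex $\Gamma^*$ is either a closed path or an open path beginning and ending with partial edges; the dual complex is connected. The 3D toric code on $\Gamma$ places one qubit on each face; its stabilizer group is generated by $B_e=\prod_{f\in\iota(e)}Z_f$ for $e\in C_1(\Gamma)$ and $A_\nu=\prod_{f\in\partial(\nu)}X_f$ for $\nu\in C_3(\Gamma)$. A logical operator is a Pauli operator commuting with all stabilizers but not itself in the stabilizer group (up to phase). A face path is a sequence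 of faces $\rho=(f_1,\dots,f_m)$ together with a sequence of pairwise distinct volumes $\Lambda(\rho)=(\nu_1,\dots,\nu_{m-1})$ such that $f_i,f_{i+1}\in\partial(\nu_i)$ for all $i$; it is a face path from $f_1$ to $f_m$. *)

theory Defs
  imports Main
begin

text \<open>A finite three-dimensional cell complex is given by finite sets of vertices V,
  edges E, faces F and volumes C (of four arbitrary types), together with incidence maps:
  vert e = endpoints of edge e (one endpoint for a partial edge),
  bd2 f = boundary edges of face f, bd3 c = boundary faces of volume c.\<close>

definition coface1 :: "'f set \<Rightarrow> ('f \<Rightarrow> 'e set) \<Rightarrow> 'e \<Rightarrow> 'f set" where
  "coface1 F bd2 e = {f \<in> F. e \<in> bd2 f}"

definition coface2 :: "'c set \<Rightarrow> ('c \<Rightarrow> 'f set) \<Rightarrow> 'f \<Rightarrow> 'c set" where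
  "coface2 C bd3 f = {c \<in> C. f \<in> bd3 c}"

definition is_path_set :: "'a set \<Rightarrow> ('a \<Rightarrow> 'a \<Rightarrow> bool) \<Rightarrow> ('a \<Rightarrow> bool) \<Rightarrow> bool" where
  "is_path_set S adj partial \<longleftrightarrow>
     (\<exists>xs. xs \<noteq> [] \<and> distinct xs \<and> set xs = S \<and>
        (\<forall>i. Suc i < length xs \<longrightarrow> adj (xs ! i) (xs ! Suc i)) \<and>
        (adj (last xs) (hd xs) \<or> (partial (hd xs) \<and> partial (last xs))))"

definition lattice3 ::
  "'v set \<Rightarrow> 'e set \<Rightarrow> 'f set \<Rightarrow> 'c set \<Rightarrow>
   ('e \<Rightarrow> 'v set) \<Rightarrow> ('f \<Rightarrow> 'e set) \<Rightarrow> ('c \<Rightarrow> 'f set) \<Rightarrow> bool" where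
  "lattice3 V E F C vert bd2 bd3 \<longleftrightarrow>
     finite V \<and> finite E \<and> finite F \<and> finite C \<and>
     (\<forall>e\<in>E. vert e \<subseteq> V \<and> (card (vert e) = 1 \<or> card (vert e) = 2)) \<and>
     (\<forall>f\<in>F. bd2 f \<subseteq> E) \<and>
     (\<forall>c\<in>C. bd3 c \<subseteq> F) \<and>
     \<comment> \<open>every face lies in the boundary of at most two volumes\<close>
     (\<forall>f\<in>F. card (coface2 C bd3 f) \<le> 2) \<and>
     \<comment> \<open>Gamma is connected (via its 1-skeleton, every edge touching some vertex)\<close>
     V \<noteq> {} \<and>
     (\<forall>u\<in>V. \<forall>w\<in>V. (u, w) \<in> {(a, b). \<exists>e\<in>E. a \<in> vert e \<and> b \<in> vert e}\<^sup>*) \<and>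
     \<comment> \<open>(L2) boundary of every face is a closed path, or an open path beginning and
         ending with partial edges\<close>
     (\<forall>f\<in>F. is_path_set (bd2 f) (\<lambda>e1 e2. vert e1 \<inter> vert e2 \<noteq> {})
                         (\<lambda>e. card (vert e) = 1)) \<and>
     \<comment> \<open>(L2) for the dual complex: the dual face of edge e has boundary the dual edges of
         the faces in iota(e); dual edges are adjacent iff the faces share a volume, and the dual
         edge of f is partial iff f lies in exactly one volume\<close>
     (\<forall>e\<in>E. is_path_set (coface1 F bd2 e)
                         (\<lambda>f1 f2. coface2 C bd3 f1 \<inter> coface2 C bd3 f2 \<noteq> {})
                         (\<lambda>f. card (coface2 C bd3 f) = 1)) \<and>
     \<comment> \<open>the dual complex is connected\<close>
     (\<forall>c1\<in>C. \<forall>c2\<in>C. (c1, c2) \<in> {(a, b). \<exists>f\<in>F. f \<in> bd3 a \<and> f \<in> bd3 b}\<^sup>*)"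

text \<open>Pauli operators on the face qubits, modulo phase, in the binary symplectic
  representation: (X-support, Z-support).\<close>
type_synonym 'f pauli = "'f set \<times> 'f set"

definition symdiff :: "'a set \<Rightarrow> 'a set \<Rightarrow> 'a set" where
  "symdiff A B = (A - B) \<union> (B - A)"

definition pmul :: "'f pauli \<Rightarrow> 'f pauli \<Rightarrow> 'f pauli" where
  "pmul P Q = (symdiff (fst P) (fst Q), symdiff (snd P) (snd Q))"

text \<open>Two Pauli operators commute iff they anticommute on an even number of qubits.\<close>
definition pcommute :: "'f pauli \<Rightarrow> 'f pauli \<Rightarrow> bool" where
  "pcommute P Q \<longleftrightarrow> even (card (fst P \<inter> snd Q) + card (snd P \<inter> fst Q))"

definition B_op :: "'f set \<Rightarrow> ('f \<Rightarrow> 'e set) \<Rightarrow> 'e \<Rightarrow> 'f pauli" where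
  "B_op F bd2 e = ({}, coface1 F bd2 e)"

definition A_op :: "('c \<Rightarrow> 'f set) \<Rightarrow> 'c \<Rightarrow> 'f pauli" where
  "A_op bd3 c = (bd3 c, {})"

inductive_set stab_group :: "'e set \<Rightarrow> 'f set \<Rightarrow> 'c set \<Rightarrow> ('f \<Rightarrow> 'e set) \<Rightarrow>
     ('c \<Rightarrow> 'f set) \<Rightarrow> 'f pauli set"
  for E F C bd2 bd3 where
  stab_id: "({}, {}) \<in> stab_group E F C bd2 bd3"
| stab_B: "P \<in> stab_group E F C bd2 bd3 \<Longrightarrow> e \<in> E \<Longrightarrow>
            pmul (B_op F bd2 e) P \<in> stab_group E F C bd2 bd3"
| stab_A: "P \<in> stab_group E F C bd2 bd3 \<Longrightarrow> c \<in> C \<Longrightarrow>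
            pmul (A_op bd3 c) P \<in> stab_group E F C bd2 bd3"

definition face_path :: "'f set \<Rightarrow> 'c set \<Rightarrow> ('c \<Rightarrow> 'f set) \<Rightarrow> 'f list \<Rightarrow> 'c list \<Rightarrow> bool" where
  "face_path F C bd3 fs cs \<longleftrightarrow>
     fs \<noteq> [] \<and> length cs = length fs - 1 \<and> set fs \<subseteq> F \<and> set cs \<subseteq> C \<and> distinct cs \<and>
     (\<forall>i < length cs. fs ! i \<in> bd3 (cs ! i) \<and> fs ! Suc i \<in> bd3 (cs ! i))"

text \<open>W^Z(rho) = prod_i Z_{f_i} (repeated factors cancel).\<close>
definition WZ :: "'f list \<Rightarrow> 'f pauli" where
  "WZ fs = ({}, {f. odd (count_list fs f)})"

end

theory Submission
  imports Defs
begin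

text \<open>A pure Z operator commutes with every B_e, and with A_\<nu> iff it meets \<partial>\<nu> in an even
  number of faces. The support of W^Z(\<rho>) meets \<partial>\<nu> with the parity of the number of
  positions i with f_i \<in> \<partial>\<nu>. Every face of the path lies in at most two volumes, the end
  faces in only one, so the volumes containing f_i are exactly \<nu>_{i-1} and \<nu>_i; as the
  \<nu>_j are distinct, \<nu> either is no \<nu>_j, or it is \<nu>_j for a single j and contains f_j and f_{j+1}
  only: an even number of positions in both cases.\<close>

lemma finite_odd_count_list: "finite {g. odd (count_list xs g)}"
  by (rule finite_subset[of _ "set xs"]) (use count_notin in fastforce, simp)

lemma even_card_odd_count_Int_iff:
  "even (card ({g. odd (count_list xs g)} \<inter> A)) \<longleftrightarrow> even (length (filter (\<lambda>g. g \<in> A) xs))"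
proof (induction xs)
  case Nil
  then show ?case by simp
next
  case (Cons x xs)
  let ?Z = "{g. odd (count_list xs g)} \<inter> A"
  let ?Z' = "{g. odd (count_list (x # xs) g)} \<inter> A"
  have fin: "finite ?Z"
    using finite_odd_count_list by blast
  consider "x \<notin> A" | "x \<in> ?Z" | "x \<in> A" "x \<notin> ?Z" by blast
  then show ?case
  proof cases
    case 1
    then have "?Z' = ?Z" by auto
    then show ?thesis using Cons.IH 1 by (simp del: count_list.simps)
  next
    case 2
    then have "?Z' = ?Z - {x}" by auto
    then have "card ?Z = Suc (card ?Z')" using 2 fin card_Suc_Diff1 by metis
    then show ?thesis using Cons.IH 2 by (auto simp del: count_list.simps)
  next
    case 3
    then have "?Z' = insert x ?Z" by auto
    then have "card ?Z' = Suc (card ?Z)" using 3 fin by simp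
    then show ?thesis using Cons.IH 3 by (simp del: count_list.simps)
  qed
qed

lemma even_card_Int_symdiff_iff:
  assumes "finite Z"
  shows "even (card (Z \<inter> symdiff A B)) \<longleftrightarrow> (even (card (Z \<inter> A)) \<longleftrightarrow> even (card (Z \<inter> B)))"
proof -
  have "Z \<inter> A \<union> Z \<inter> B = Z \<inter> symdiff A B \<union> Z \<inter> A \<inter> B"
    unfolding symdiff_def by auto
  moreover have "card (Z \<inter> symdiff A B \<union> Z \<inter> A \<inter> B) = card (Z \<inter> symdiff A B) + card (Z \<inter> A \<inter> B)"
    by (rule card_Un_disjoint) (use assms in \<open>auto simp: symdiff_def\<close>)
  moreover have "card (Z \<inter> A) + card (Z \<inter> B) = card (Z \<inter> A \<union> Z \<inter> B) + card (Z \<inter> A \<inter> B)"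
    using card_Un_Int[of "Z \<inter> A" "Z \<inter> B"] assms by (simp add: Int_assoc Int_left_commute)
  ultimately have "card (Z \<inter> A) + card (Z \<inter> B) = card (Z \<inter> symdiff A B) + 2 * card (Z \<inter> A \<inter> B)"
    by simp
  then show ?thesis by presburger
qed

lemma pcommute_Z_stab_group:
  assumes "finite Z" and "\<And>c. c \<in> C \<Longrightarrow> even (card (Z \<inter> bd3 c))"
    and "S \<in> stab_group E F C bd2 bd3"
  shows "pcommute ({}, Z) S"
proof -
  from assms(3) have "even (card (Z \<inter> fst S))"
  proof (induction rule: stab_group.induct)
    case stab_id
    then show ?case by simp
  next
    case (stab_B P e)
    then show ?case by (simp add: pmul_def B_op_def symdiff_def)
  next
    case (stab_A P c)
    then show ?case
      using even_card_Int_symdiff_iff[OF assms(1), of "bd3 c" "fst P"] assms(2)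
      by (simp add: pmul_def A_op_def)
  qed
  then show ?thesis by (simp add: pcommute_def)
qed

lemma face_path_coface2_eq:
  assumes path: "face_path F C bd3 fs cs" and "finite C" and "length fs \<ge> 2"
    and at_most_two: "\<And>g. g \<in> set fs \<Longrightarrow> card (coface2 C bd3 g) \<le> 2"
    and hd_single: "card (coface2 C bd3 (hd fs)) = 1"
    and last_single: "card (coface2 C bd3 (last fs)) = 1"
    and i: "i < length fs"
  shows "coface2 C bd3 (fs ! i) = (!) cs ` {k. k < length cs \<and> (k = i \<or> Suc k = i)}"
    (is "?cof = (!) cs ` ?K")
proof -
  have "fs \<noteq> []" using \<open>length fs \<ge> 2\<close> by auto
  have len: "length cs = length fs - 1" and "set cs \<subseteq> C" "distinct cs"
    and incident: "\<And>k. k < length cs \<Longrightarrow> fs ! k \<in> bd3 (cs ! k) \<and> fs ! Suc k \<in> bd3 (cs ! k)"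
    using path unfolding face_path_def by auto
  have sub: "(!) cs ` ?K \<subseteq> ?cof"
    using incident \<open>set cs \<subseteq> C\<close> nth_mem unfolding coface2_def by fastforce
  have card_image: "card ((!) cs ` ?K) = card ?K"
    by (rule card_image) (use \<open>distinct cs\<close> in \<open>auto simp: inj_on_def nth_eq_iff_index_eq\<close>)
  have "card ?cof \<le> card ?K"
  proof -
    consider "i = 0" | "i = length cs" | "0 < i" "i < length cs"
      using i len by linarith
    then show ?thesis
    proof cases
      case 1
      then have "?K = {0}" and "fs ! i = hd fs"
        using len \<open>length fs \<ge> 2\<close> \<open>fs \<noteq> []\<close> by (auto simp: hd_conv_nth)
      then show ?thesis using hd_single by simp
    next
      case 2
      then have "?K = {i - 1}" and "fs ! i = last fs"
        using len \<open>length fs \<ge> 2\<close> \<open>fs \<noteq> []\<close> by (auto simp: last_conv_nth)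
      then show ?thesis using last_single by simp
    next
      case 3
      then have "?K = {i - 1, i}" by auto
      then show ?thesis using 3 at_most_two[OF nth_mem[OF i]] by simp
    qed
  qed
  moreover have "finite ?cof" using \<open>finite C\<close> unfolding coface2_def by simp
  ultimately show ?thesis
    using card_seteq[OF _ sub] card_image by simp
qed

lemma face_path_even_card_positions:
  assumes path: "face_path F C bd3 fs cs" and "finite C" and "length fs \<ge> 2"
    and "\<And>g. g \<in> set fs \<Longrightarrow> card (coface2 C bd3 g) \<le> 2"
    and "card (coface2 C bd3 (hd fs)) = 1" and "card (coface2 C bd3 (last fs)) = 1"
    and "c \<in> C"
  shows "even (card {i. i < length fs \<and> fs ! i \<in> bd3 c})"
proof -
  have len: "length cs = length fs - 1" and "distinct cs"
    using path unfolding face_path_def by auto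
  have "fs ! i \<in> bd3 c \<longleftrightarrow> (\<exists>k < length cs. cs ! k = c \<and> (k = i \<or> Suc k = i))"
    if "i < length fs" for i
  proof -
    have "fs ! i \<in> bd3 c \<longleftrightarrow> c \<in> coface2 C bd3 (fs ! i)"
      using \<open>c \<in> C\<close> by (simp add: coface2_def)
    also have "\<dots> \<longleftrightarrow> (\<exists>k < length cs. cs ! k = c \<and> (k = i \<or> Suc k = i))"
      using face_path_coface2_eq[OF assms(1-6) that] by auto
    finally show ?thesis .
  qed
  then have positions: "{i. i < length fs \<and> fs ! i \<in> bd3 c} =
      {i. i < length fs \<and> (\<exists>k < length cs. cs ! k = c \<and> (k = i \<or> Suc k = i))}"
    by auto
  show ?thesis
  proof (cases "c \<in> set cs")
    case False
    then have "{i. i < length fs \<and> fs ! i \<in> bd3 c} = {}"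
      unfolding positions by (auto simp: in_set_conv_nth)
    then show ?thesis by (simp only: card.empty even_zero)
  next
    case True
    then obtain j where j: "j < length cs" "cs ! j = c" by (auto simp: in_set_conv_nth)
    then have unique: "(\<exists>k < length cs. cs ! k = c \<and> P k) \<longleftrightarrow> P j" for P
      using \<open>distinct cs\<close> nth_eq_iff_index_eq by metis
    have "{i. i < length fs \<and> fs ! i \<in> bd3 c} = {i. i < length fs \<and> (j = i \<or> Suc j = i)}"
      unfolding positions unique ..
    also have "\<dots> = {j, Suc j}"
      using j len by auto
    finally show ?thesis by simp
  qed
qed

theorem lemma1:
  fixes V :: "'v set" and E :: "'e set" and F :: "'f set" and C :: "'c set"
    and vert :: "'e \<Rightarrow> 'v set" and bd2 :: "'f \<Rightarrow> 'e set" and bd3 :: "'c \<Rightarrow> 'f set"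
    and f f' :: 'f and fs :: "'f list" and cs :: "'c list"
  assumes "lattice3 V E F C vert bd2 bd3"
    and "f \<in> F" and "card (coface2 C bd3 f) = 1"
    and "f' \<in> F" and "card (coface2 C bd3 f') = 1"
    and "face_path F C bd3 fs cs" and "hd fs = f" and "last fs = f'" and "length fs \<ge> 2"
  shows "\<forall>S \<in> stab_group E F C bd2 bd3. pcommute (WZ fs) S"
proof
  fix S assume S: "S \<in> stab_group E F C bd2 bd3"
  let ?Z = "{g. odd (count_list fs g)}"
  have "finite C" and "\<And>g. g \<in> set fs \<Longrightarrow> card (coface2 C bd3 g) \<le> 2"
    using assms(1,6) unfolding lattice3_def face_path_def by auto
  then have "even (card {i. i < length fs \<and> fs ! i \<in> bd3 c})" if "c \<in> C" for c
    using face_path_even_card_positions[OF assms(6)] assms(3,5,7-9) that by simp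
  then have "even (card (?Z \<inter> bd3 c))" if "c \<in> C" for c
    using that by (simp add: even_card_odd_count_Int_iff length_filter_conv_card)
  then show "pcommute (WZ fs) S"
    unfolding WZ_def using pcommute_Z_stab_group finite_odd_count_list S by blast
qed

end
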